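(* Let $\phi:\mathbb{N}\cup\{0\}\to\mathbb{R}_+$ be such that for every $C>0$ the series $\sum_{k\in\mathbb{N}}C^k\phi(k)(k!)^{-2}$ converges. Then $\mathcal{S}\subset T_\phi(V)$, i.e. the signature $S(\gamma)_{s,t}$ of every continuous bounded variation path $\gamma$ and every $s<t$ belongs to $T_\phi(V)$.
   Context: $V$ is a finite-dimensional real inner product space, $\langle\cdot,\cdot\rangle_k$ the induced Hilbert–Schmidt inner product on $V^{\otimes k}$, $T(V)=\bigoplus_kV^{\otimes k}$ (tensor polynomials) and $T((V))=\prod_kV^{\otimes k}$ (formal tensor series). $\langle a,b\rangle_\phi=\sum_k\phi(k)\langle a_k,b_k\rangle_k$ and $T_\phi(V)$ is the Hilbert space completion of $T(V)$ under it, viewed inside $T((V))$. Signature: $S(\gamma)_{s,t}=1+\sum_{k\ge1}\int_{s<u_1<\dots<u_k<t}d\gamma_{u_1}\otimes\cdots\otimes d\gamma_{u_k}$, and $\mathcal{S}=\{S(\gamma)_{s,t}:\gamma \text{ continuous of bounded variation},\ s<t\}$. *)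

theory Defs
  imports "HOL-Analysis.Analysis"
begin

definition is_partition :: "real \<Rightarrow> real \<Rightarrow> nat \<Rightarrow> (nat \<Rightarrow> real) \<Rightarrow> bool" where
  "is_partition a b n x \<longleftrightarrow> x 0 = a \<and> x n = b \<and> (\<forall>j<n. x j \<le> x (Suc j))"

definition bounded_variation_on :: "(real \<Rightarrow> 'v::real_normed_vector) \<Rightarrow> real \<Rightarrow> real \<Rightarrow> bool" where
  "bounded_variation_on \<gamma> a b \<longleftrightarrow>
     (\<exists>M. \<forall>n x. is_partition a b n x \<longrightarrow> (\<Sum>j<n. norm (\<gamma> (x (Suc j)) - \<gamma> (x j))) \<le> M)"

definition RS_sum :: "(real \<Rightarrow> real) \<Rightarrow> (real \<Rightarrow> real) \<Rightarrow> nat \<Rightarrow> (nat \<Rightarrow> real) \<Rightarrow> (nat \<Rightarrow> real) \<Rightarrow> real" where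
  "RS_sum f g n x \<tau> = (\<Sum>j<n. f (\<tau> j) * (g (x (Suc j)) - g (x j)))"

definition has_RS_integral :: "(real \<Rightarrow> real) \<Rightarrow> (real \<Rightarrow> real) \<Rightarrow> real \<Rightarrow> real \<Rightarrow> real \<Rightarrow> bool" where
  "has_RS_integral f g a b I \<longleftrightarrow>
     (\<forall>\<epsilon>>0. \<exists>\<delta>>0. \<forall>n x \<tau>. is_partition a b n x \<and>
        (\<forall>j<n. x (Suc j) - x j < \<delta> \<and> x j \<le> \<tau> j \<and> \<tau> j \<le> x (Suc j))
        \<longrightarrow> \<bar>RS_sum f g n x \<tau> - I\<bar> < \<epsilon>)"

definition RS_integral :: "(real \<Rightarrow> real) \<Rightarrow> (real \<Rightarrow> real) \<Rightarrow> real \<Rightarrow> real \<Rightarrow> real" where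
  "RS_integral f g a b = (THE I. has_RS_integral f g a b I)"

text \<open>Formal tensor series in T((V)) are represented by their coordinates with respect to the
  orthonormal basis e_{i1} \<otimes> ... \<otimes> e_{ik} built from Basis: a word w (list of basis vectors)
  of length k gives the coefficient of a_k on the corresponding basis tensor.
  Coordinates on words not made of Basis vectors are irrelevant.\<close>
type_synonym 'v tensor_series = "'v list \<Rightarrow> real"

definition words :: "nat \<Rightarrow> 'v::euclidean_space list set" where
  "words k = {w. length w = k \<and> set w \<subseteq> Basis}"

definition level_norm2 :: "'v::euclidean_space tensor_series \<Rightarrow> nat \<Rightarrow> real" where
  "level_norm2 a k = (\<Sum>w\<in>words k. (a w)\<^sup>2)"

text \<open>T_phi(V): completion of T(V) under the phi-weighted inner product, viewed inside T((V)).\<close>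
definition T_phi :: "(nat \<Rightarrow> real) \<Rightarrow> 'v::euclidean_space tensor_series set" where
  "T_phi \<phi> = {a. summable (\<lambda>k. \<phi> k * level_norm2 a k)}"

text \<open>Iterated integrals: word read left to right, first letter integrated at the smallest time.
  sig_rev takes the reversed word.\<close>
fun sig_rev :: "(real \<Rightarrow> 'v::euclidean_space) \<Rightarrow> real \<Rightarrow> 'v list \<Rightarrow> real \<Rightarrow> real" where
  "sig_rev \<gamma> s [] t = 1"
| "sig_rev \<gamma> s (e # w) t = RS_integral (\<lambda>u. sig_rev \<gamma> s w u) (\<lambda>u. \<gamma> u \<bullet> e) s t"

definition signature :: "(real \<Rightarrow> 'v::euclidean_space) \<Rightarrow> real \<Rightarrow> real \<Rightarrow> 'v tensor_series" where
  "signature \<gamma> s t = (\<lambda>w. sig_rev \<gamma> s (rev w) t)"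

end

theory Submission
  imports Defs
begin

text \<open>Each coordinate of the signature is an iterated Riemann--Stieltjes integral against the
  coordinates of the path, and every coordinate of the path has increments dominated by those of
  the variation function V(u), the total variation of the path on [s,u]. Against such an
  integrator a continuous integrand is integrable (two fine tagged partitions are compared through
  their merge), and the indefinite integral is again continuous. Since integrating V^k/k! against
  dV gives at most V^(k+1)/(k+1)! by telescoping, induction on the word gives the bound L^k/k!
  for the coordinates on words of length k, L being the total variation. With d the dimension,
  the level-k squared norm is then at most (d L^2)^k/(k!)^2, so the hypothesis on phi with
  C = d L^2 + 1 gives summability.\<close>

section \<open>Partitions\<close>

lemma is_partition_mono:
  assumes "is_partition a b n x" "i \<le> j" "j \<le> n"
  shows "x i \<le> x j"
  using assms(2,3)
proof (induction j rule: dec_induct)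
  case (step k)
  then have "x i \<le> x k" by simp
  also have "x k \<le> x (Suc k)" using assms(1) step.prems unfolding is_partition_def by simp
  finally show ?case .
qed simp

lemma is_partition_range:
  assumes "is_partition a b n x" "j \<le> n"
  shows "a \<le> x j \<and> x j \<le> b"
  using is_partition_mono[OF assms(1), of 0 j] is_partition_mono[OF assms(1), of j n] assms
  unfolding is_partition_def by auto

lemma is_partition_trivial:
  assumes "is_partition a a n x" "j \<le> n"
  shows "x j = a"
  using is_partition_range[OF assms] by simp

lemma is_partition_tail:
  "is_partition a b (Suc n) x \<Longrightarrow> is_partition (x 1) b n (x \<circ> Suc)"
  unfolding is_partition_def by auto

lemma is_partition_move_start:
  "is_partition a b (Suc m) y \<Longrightarrow> c \<le> y 1 \<Longrightarrow> is_partition c b (Suc m) (y(0 := c))"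
  unfolding is_partition_def by (auto simp: less_Suc_eq_0_disj)

definition fine_tagged :: "real \<Rightarrow> nat \<Rightarrow> (nat \<Rightarrow> real) \<Rightarrow> (nat \<Rightarrow> real) \<Rightarrow> bool" where
  "fine_tagged \<delta> n x \<tau> \<longleftrightarrow> (\<forall>j<n. x (Suc j) - x j < \<delta> \<and> x j \<le> \<tau> j \<and> \<tau> j \<le> x (Suc j))"

lemma fine_tagged_mono: "fine_tagged \<delta> n x \<tau> \<Longrightarrow> \<delta> \<le> \<delta>' \<Longrightarrow> fine_tagged \<delta>' n x \<tau>"
  unfolding fine_tagged_def by force

definition uniform_partition :: "real \<Rightarrow> real \<Rightarrow> nat \<Rightarrow> nat \<Rightarrow> real" where
  "uniform_partition a b N j = a + (b - a) * real j / real N"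

lemma uniform_partition_eventually_fine:
  assumes "a \<le> b" "\<delta> > 0"
  shows "eventually (\<lambda>N. is_partition a b N (uniform_partition a b N) \<and>
    fine_tagged \<delta> N (uniform_partition a b N) (uniform_partition a b N)) sequentially"
proof -
  obtain N0 :: nat where N0: "(b - a) / \<delta> < real N0" using reals_Archimedean2 by blast
  have "is_partition a b N (uniform_partition a b N) \<and>
      fine_tagged \<delta> N (uniform_partition a b N) (uniform_partition a b N)" if "N \<ge> Suc N0" for N
  proof
    have N: "real N > 0" using that by simp
    have "b - a < \<delta> * real N0" using N0 assms(2) by (simp add: field_simps)
    also have "\<dots> \<le> \<delta> * real N" using that assms(2) by (intro mult_left_mono) auto
    finally have "b - a < \<delta> * real N" .
    then have step: "(b - a) / real N < \<delta>" using N by (simp add: field_simps)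
    have "uniform_partition a b N (Suc j) - uniform_partition a b N j = (b - a) / real N" for j
      unfolding uniform_partition_def using N by (simp add: field_simps)
    moreover have "(b - a) / real N \<ge> 0" using assms(1) by simp
    ultimately show "fine_tagged \<delta> N (uniform_partition a b N) (uniform_partition a b N)"
      unfolding fine_tagged_def using step by (auto simp: algebra_simps)
    show "is_partition a b N (uniform_partition a b N)"
      unfolding is_partition_def uniform_partition_def using assms(1) N
      by (auto simp: divide_simps intro!: mult_left_mono)
  qed
  then show ?thesis unfolding eventually_sequentially by blast
qed

lemma fine_partition_exists:
  assumes "a \<le> b" "\<delta> > 0"
  obtains n x where "is_partition a b n x" "fine_tagged \<delta> n x x"
  using eventually_happens'[OF sequentially_bot uniform_partition_eventually_fine[OF assms]]
  by blast

definition partition_append :: "nat \<Rightarrow> (nat \<Rightarrow> real) \<Rightarrow> (nat \<Rightarrow> real) \<Rightarrow> nat \<Rightarrow> real" where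
  "partition_append n x y j = (if j \<le> n then x j else y (j - n))"

lemma partition_append_shift:
  assumes "y 0 = x n"
  shows "partition_append n x y (n + j) = y j"
  using assms unfolding partition_append_def by (cases j) auto

lemma partition_append_cases:
  assumes "j < n + m"
  obtains "j < n" "partition_append n x y j = x j" "partition_append n x y (Suc j) = x (Suc j)"
    | i where "i < m" "j = n + i"
  using assms unfolding partition_append_def
  by (metis add_diff_inverse_nat add_less_imp_less_left Suc_leI less_imp_le_nat)

lemma is_partition_append:
  assumes x: "is_partition a c n x" and y: "is_partition c b m y"
  shows "is_partition a b (n + m) (partition_append n x y)"
proof -
  have shift: "partition_append n x y (n + i) = y i" for i
    using x y unfolding is_partition_def by (intro partition_append_shift) simp
  show ?thesis
    unfolding is_partition_def
  proof (intro conjI allI impI)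
    show "partition_append n x y 0 = a"
      using x unfolding is_partition_def partition_append_def by simp
    show "partition_append n x y (n + m) = b" using shift[of m] y unfolding is_partition_def by simp
  next
    fix j assume "j < n + m"
    then show "partition_append n x y j \<le> partition_append n x y (Suc j)"
    proof (cases rule: partition_append_cases[where x = x and y = y])
      case (2 i)
      then show ?thesis using shift[of i] shift[of "Suc i"] y unfolding is_partition_def by simp
    qed (use x in \<open>auto simp: is_partition_def\<close>)
  qed
qed

lemma fine_tagged_append:
  assumes x: "is_partition a c n x" "fine_tagged \<delta> n x x"
    and y: "is_partition c b m y" "fine_tagged \<delta> m y y"
  shows "fine_tagged \<delta> (n + m) (partition_append n x y) (partition_append n x y)"
proof -
  have shift: "partition_append n x y (n + i) = y i" for i
    using x y unfolding is_partition_def by (intro partition_append_shift) simp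
  show ?thesis
    unfolding fine_tagged_def
  proof (intro allI impI)
    fix j assume "j < n + m"
    then show "partition_append n x y (Suc j) - partition_append n x y j < \<delta> \<and>
        partition_append n x y j \<le> partition_append n x y j \<and>
        partition_append n x y j \<le> partition_append n x y (Suc j)"
    proof (cases rule: partition_append_cases[where x = x and y = y])
      case (2 i)
      then show ?thesis using shift[of i] shift[of "Suc i"] y unfolding fine_tagged_def by simp
    qed (use x in \<open>auto simp: fine_tagged_def\<close>)
  qed
qed

section \<open>Riemann--Stieltjes sums\<close>

lemma RS_sum_Suc:
  "RS_sum f g (Suc n) x \<tau> = f (\<tau> 0) * (g (x 1) - g (x 0)) + RS_sum f g n (x \<circ> Suc) (\<tau> \<circ> Suc)"
  unfolding RS_sum_def by (subst sum.lessThan_Suc_shift) simp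

lemma RS_sum_move_start:
  "RS_sum f g (Suc m) y \<sigma> = f (\<sigma> 0) * (g c - g (y 0)) + RS_sum f g (Suc m) (y(0 := c)) \<sigma>"
  unfolding RS_sum_Suc by (simp add: comp_def algebra_simps)

lemma RS_sum_trivial:
  assumes "is_partition a a n x"
  shows "RS_sum f g n x \<tau> = 0"
  unfolding RS_sum_def using is_partition_trivial[OF assms] by (intro sum.neutral) auto

lemma RS_sum_append:
  assumes "is_partition a c n x" "is_partition c b m y"
  shows "RS_sum f g (n + m) (partition_append n x y) (partition_append n x y) =
    RS_sum f g n x x + RS_sum f g m y y"
proof -
  have shift: "partition_append n x y (n + i) = y i" for i
    using assms unfolding is_partition_def by (intro partition_append_shift) simp
  have "RS_sum f g (n + m) (partition_append n x y) (partition_append n x y) =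
    RS_sum f g n (partition_append n x y) (partition_append n x y) +
    (\<Sum>i<m. f (partition_append n x y (n + i)) *
      (g (partition_append n x y (n + Suc i)) - g (partition_append n x y (n + i))))"
    unfolding RS_sum_def by (induction m) simp_all
  also have "RS_sum f g n (partition_append n x y) (partition_append n x y) = RS_sum f g n x x"
    unfolding RS_sum_def partition_append_def by (intro sum.cong) auto
  finally show ?thesis unfolding shift by (simp add: RS_sum_def)
qed

lemma RS_sum_bound_telescoping:
  assumes x: "is_partition a b n x"
    and H: "\<forall>j<n. \<bar>(f (\<tau> j) - c) * (g (x (Suc j)) - g (x j))\<bar> \<le> H (x (Suc j)) - H (x j)"
  shows "\<bar>RS_sum f g n x \<tau> - c * (g b - g a)\<bar> \<le> H b - H a"
proof -
  have tele: "(\<Sum>j<n. h (x (Suc j)) - h (x j)) = h b - h a" for h :: "real \<Rightarrow> real"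
    using sum_lessThan_telescope[of "\<lambda>j. h (x j)" n] x unfolding is_partition_def by simp
  have "RS_sum f g n x \<tau> - c * (g b - g a) = (\<Sum>j<n. (f (\<tau> j) - c) * (g (x (Suc j)) - g (x j)))"
    unfolding RS_sum_def tele[of g, symmetric]
    by (simp add: sum_distrib_left sum_subtractf[symmetric] algebra_simps)
  also have "\<bar>\<dots>\<bar> \<le> (\<Sum>j<n. H (x (Suc j)) - H (x j))"
    using H by (intro order_trans[OF sum_abs sum_mono]) auto
  also have "\<dots> = H b - H a" by (rule tele)
  finally show ?thesis .
qed

definition increments_dominated :: "(real \<Rightarrow> real) \<Rightarrow> (real \<Rightarrow> real) \<Rightarrow> real \<Rightarrow> real \<Rightarrow> bool" where
  "increments_dominated g W a b \<longleftrightarrow> (\<forall>u v. a \<le> u \<and> u \<le> v \<and> v \<le> b \<longrightarrow> \<bar>g v - g u\<bar> \<le> W v - W u)"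

lemma increments_dominatedD:
  "increments_dominated g W a b \<Longrightarrow> a \<le> u \<Longrightarrow> u \<le> v \<Longrightarrow> v \<le> b \<Longrightarrow> \<bar>g v - g u\<bar> \<le> W v - W u"
  unfolding increments_dominated_def by blast

lemma increments_dominated_subinterval:
  "increments_dominated g W a b \<Longrightarrow> a \<le> a' \<Longrightarrow> b' \<le> b \<Longrightarrow> increments_dominated g W a' b'"
  unfolding increments_dominated_def by force

lemma increments_dominated_mono:
  "increments_dominated g W a b \<Longrightarrow> a \<le> u \<Longrightarrow> u \<le> v \<Longrightarrow> v \<le> b \<Longrightarrow> W u \<le> W v"
  using increments_dominatedD[of g W a b u v] by linarith

definition tags_close ::
  "(real \<Rightarrow> real) \<Rightarrow> real \<Rightarrow> nat \<Rightarrow> (nat \<Rightarrow> real) \<Rightarrow> (nat \<Rightarrow> real) \<Rightarrow>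
    nat \<Rightarrow> (nat \<Rightarrow> real) \<Rightarrow> (nat \<Rightarrow> real) \<Rightarrow> bool" where
  "tags_close f \<epsilon> n x \<tau> m y \<sigma> \<longleftrightarrow>
    (\<forall>j<n. \<forall>i<m. x j \<le> y (Suc i) \<and> y i \<le> x (Suc j) \<longrightarrow> \<bar>f (\<tau> j) - f (\<sigma> i)\<bar> \<le> \<epsilon>)"

lemma tags_close_sym: "tags_close f \<epsilon> n x \<tau> m y \<sigma> \<Longrightarrow> tags_close f \<epsilon> m y \<sigma> n x \<tau>"
  unfolding tags_close_def by (auto simp: abs_minus_commute)

lemma tags_close_tail:
  assumes "tags_close f \<epsilon> (Suc n) x \<tau> (Suc m) y \<sigma>" "is_partition a b (Suc n) x" "y 0 = a"
  shows "tags_close f \<epsilon> n (x \<circ> Suc) (\<tau> \<circ> Suc) (Suc m) (y(0 := x 1)) \<sigma>"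
  unfolding tags_close_def
proof (intro allI impI)
  fix j i assume ji: "j < n" "i < Suc m"
    and overlap: "(x \<circ> Suc) j \<le> (y(0 := x 1)) (Suc i) \<and> (y(0 := x 1)) i \<le> (x \<circ> Suc) (Suc j)"
  have "y i \<le> x (Suc (Suc j))"
    using overlap assms(3) is_partition_range[OF assms(2), of "Suc (Suc j)"] ji by (cases i) auto
  then show "\<bar>f ((\<tau> \<circ> Suc) j) - f (\<sigma> i)\<bar> \<le> \<epsilon>"
    using assms(1) overlap ji unfolding tags_close_def by auto
qed

text \<open>Two tagged partitions are compared by merging them: cut both at the end of the shorter
  of the two first intervals and recurse on the rest.\<close>
lemma RS_sum_close:
  assumes "is_partition a b n x" "is_partition a b m y" "tags_close f \<epsilon> n x \<tau> m y \<sigma>"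
    "increments_dominated g W a b" "\<epsilon> \<ge> 0"
  shows "\<bar>RS_sum f g n x \<tau> - RS_sum f g m y \<sigma>\<bar> \<le> \<epsilon> * (W b - W a)"
  using assms
proof (induction "n + m" arbitrary: n m a x y \<tau> \<sigma> rule: less_induct)
  case less
  have cut: "\<bar>RS_sum f g (Suc n') x' \<tau>' - RS_sum f g (Suc m') y' \<sigma>'\<bar> \<le> \<epsilon> * (W b - W a)"
    if "Suc n' + Suc m' = n + m" and x': "is_partition a b (Suc n') x'"
      and y': "is_partition a b (Suc m') y'"
      and close: "tags_close f \<epsilon> (Suc n') x' \<tau>' (Suc m') y' \<sigma>'"
      and "x' 1 \<le> y' 1"
    for n' m' x' y' \<tau>' \<sigma>'
  proof -
    have a: "x' 0 = a" "y' 0 = a" using x' y' unfolding is_partition_def by auto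
    have x'1: "a \<le> x' 1" "x' 1 \<le> b" using is_partition_range[OF x', of 1] by auto
    have rest: "\<bar>RS_sum f g n' (x' \<circ> Suc) (\<tau>' \<circ> Suc) - RS_sum f g (Suc m') (y'(0 := x' 1)) \<sigma>'\<bar>
        \<le> \<epsilon> * (W b - W (x' 1))"
      using less.hyps[OF _ is_partition_tail[OF x'] is_partition_move_start[OF y' \<open>x' 1 \<le> y' 1\<close>]
          tags_close_tail[OF close x' a(2)]
          increments_dominated_subinterval[OF less.prems(4) x'1(1) order_refl]
          less.prems(5)]
        \<open>Suc n' + Suc m' = n + m\<close> by simp
    have "\<bar>f (\<tau>' 0) - f (\<sigma>' 0)\<bar> \<le> \<epsilon>"
      using close a x'1 is_partition_range[OF y', of 1] unfolding tags_close_def by auto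
    moreover have "\<bar>g (x' 1) - g a\<bar> \<le> W (x' 1) - W a"
      using increments_dominatedD[OF less.prems(4), of a "x' 1"] x'1 by simp
    ultimately have first: "\<bar>(f (\<tau>' 0) - f (\<sigma>' 0)) * (g (x' 1) - g a)\<bar> \<le> \<epsilon> * (W (x' 1) - W a)"
      unfolding abs_mult using less.prems(5) by (intro mult_mono) auto
    have "RS_sum f g (Suc n') x' \<tau>' - RS_sum f g (Suc m') y' \<sigma>' =
        (f (\<tau>' 0) - f (\<sigma>' 0)) * (g (x' 1) - g a) +
        (RS_sum f g n' (x' \<circ> Suc) (\<tau>' \<circ> Suc) - RS_sum f g (Suc m') (y'(0 := x' 1)) \<sigma>')"
      using RS_sum_Suc[of f g n' x' \<tau>'] RS_sum_move_start[of f g m' y' \<sigma>' "x' 1"] a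
      by (simp add: algebra_simps)
    then show ?thesis using first rest by (simp add: abs_le_iff algebra_simps)
  qed
  show ?case
  proof (cases "n = 0 \<or> m = 0")
    case True
    then have "a = b" using less.prems(1,2) unfolding is_partition_def by auto
    then show ?thesis using RS_sum_trivial less.prems(1,2) by simp
  next
    case False
    then obtain n' m' where nm: "n = Suc n'" "m = Suc m'" by (metis not0_implies_Suc)
    show ?thesis
    proof (cases "x 1 \<le> y 1")
      case True
      then show ?thesis using cut less.prems(1-3) unfolding nm by simp
    next
      case False
      then have "\<bar>RS_sum f g m y \<sigma> - RS_sum f g n x \<tau>\<bar> \<le> \<epsilon> * (W b - W a)"
        using cut[of m' n'] less.prems(1-3) tags_close_sym unfolding nm by simp
      then show ?thesis by (simp add: abs_minus_commute)
    qed
  qed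
qed

section \<open>The Riemann--Stieltjes integral\<close>

lemma has_RS_integral_fine:
  "has_RS_integral f g a b I \<longleftrightarrow>
     (\<forall>\<epsilon>>0. \<exists>\<delta>>0. \<forall>n x \<tau>. is_partition a b n x \<and> fine_tagged \<delta> n x \<tau> \<longrightarrow> \<bar>RS_sum f g n x \<tau> - I\<bar> < \<epsilon>)"
  unfolding has_RS_integral_def fine_tagged_def by simp

lemma has_RS_integral_approx:
  assumes "has_RS_integral f g a b I" "a \<le> b" "\<epsilon> > 0" "\<delta>' > 0"
  obtains n x where "is_partition a b n x" "fine_tagged \<delta>' n x x" "\<bar>RS_sum f g n x x - I\<bar> < \<epsilon>"
proof -
  obtain \<delta> where \<delta>: "\<delta> > 0"
    "\<forall>n x \<tau>. is_partition a b n x \<and> fine_tagged \<delta> n x \<tau> \<longrightarrow> \<bar>RS_sum f g n x \<tau> - I\<bar> < \<epsilon>"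
    using assms(1,3) unfolding has_RS_integral_fine by blast
  obtain n x where "is_partition a b n x" "fine_tagged (min \<delta> \<delta>') n x x"
    using fine_partition_exists[OF assms(2)] \<delta>(1) assms(4) by (metis min_less_iff_conj)
  then show ?thesis using that \<delta>(2) fine_tagged_mono by (meson min.cobounded1 min.cobounded2)
qed

lemma has_RS_integral_unique:
  assumes "has_RS_integral f g a b I" "has_RS_integral f g a b J" "a \<le> b"
  shows "I = J"
proof -
  have close: "\<bar>I - J\<bar> < 2 * \<epsilon>" if "\<epsilon> > 0" for \<epsilon>
  proof -
    obtain \<delta> where \<delta>: "\<delta> > 0"
      "\<forall>n x \<tau>. is_partition a b n x \<and> fine_tagged \<delta> n x \<tau> \<longrightarrow> \<bar>RS_sum f g n x \<tau> - J\<bar> < \<epsilon>"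
      using assms(2) \<open>\<epsilon> > 0\<close> unfolding has_RS_integral_fine by blast
    obtain n x where "is_partition a b n x" "fine_tagged \<delta> n x x" "\<bar>RS_sum f g n x x - I\<bar> < \<epsilon>"
      using has_RS_integral_approx[OF assms(1,3) \<open>\<epsilon> > 0\<close> \<delta>(1)] .
    then show ?thesis using \<delta>(2) by fastforce
  qed
  have "\<bar>I - J\<bar> \<le> 0 + e" if "e > 0" for e :: real
    using close[of "e / 2"] that by simp
  then show ?thesis using field_le_epsilon[of "\<bar>I - J\<bar>" 0] by simp
qed

lemma RS_integral_eqI:
  "has_RS_integral f g a b I \<Longrightarrow> a \<le> b \<Longrightarrow> RS_integral f g a b = I"
  unfolding RS_integral_def using has_RS_integral_unique by blast

definition RS_Cauchy :: "(real \<Rightarrow> real) \<Rightarrow> (real \<Rightarrow> real) \<Rightarrow> real \<Rightarrow> real \<Rightarrow> bool" where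
  "RS_Cauchy f g a b \<longleftrightarrow> (\<forall>e>0. \<exists>\<delta>>0. \<forall>n x \<tau> m y \<sigma>.
    is_partition a b n x \<and> fine_tagged \<delta> n x \<tau> \<and> is_partition a b m y \<and> fine_tagged \<delta> m y \<sigma> \<longrightarrow>
    \<bar>RS_sum f g n x \<tau> - RS_sum f g m y \<sigma>\<bar> \<le> e)"

lemma RS_CauchyD:
  assumes "RS_Cauchy f g a b" "e > 0"
  obtains \<delta> where "\<delta> > 0" "\<And>n x \<tau> m y \<sigma>. is_partition a b n x \<Longrightarrow> fine_tagged \<delta> n x \<tau> \<Longrightarrow>
    is_partition a b m y \<Longrightarrow> fine_tagged \<delta> m y \<sigma> \<Longrightarrow> \<bar>RS_sum f g n x \<tau> - RS_sum f g m y \<sigma>\<bar> \<le> e"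
  using assms unfolding RS_Cauchy_def by meson

lemma RS_Cauchy_uniform_sums:
  assumes "RS_Cauchy f g a b" "a \<le> b"
  shows "Cauchy (\<lambda>N. RS_sum f g N (uniform_partition a b N) (uniform_partition a b N))"
proof -
  define S where "S = (\<lambda>N. RS_sum f g N (uniform_partition a b N) (uniform_partition a b N))"
  have "Cauchy S"
  proof (rule CauchyI)
    fix e :: real assume "e > 0"
    obtain \<delta> where \<delta>: "\<delta> > 0" "\<And>n x \<tau> m y \<sigma>. is_partition a b n x \<Longrightarrow> fine_tagged \<delta> n x \<tau> \<Longrightarrow>
      is_partition a b m y \<Longrightarrow> fine_tagged \<delta> m y \<sigma> \<Longrightarrow> \<bar>RS_sum f g n x \<tau> - RS_sum f g m y \<sigma>\<bar> \<le> e / 2"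
      using RS_CauchyD[OF assms(1), of "e / 2"] \<open>e > 0\<close> by auto
    obtain N0 where "\<forall>N\<ge>N0. is_partition a b N (uniform_partition a b N) \<and>
        fine_tagged \<delta> N (uniform_partition a b N) (uniform_partition a b N)"
      using uniform_partition_eventually_fine[OF assms(2) \<delta>(1)]
      unfolding eventually_sequentially by blast
    then have "norm (S m - S n) < e" if "m \<ge> N0" "n \<ge> N0" for m n
      using \<delta>(2) that \<open>e > 0\<close> unfolding S_def by (smt (verit) field_sum_of_halves real_norm_def)
    then show "\<exists>M. \<forall>m\<ge>M. \<forall>n\<ge>M. norm (S m - S n) < e" by blast
  qed
  then show ?thesis unfolding S_def .
qed

lemma RS_Cauchy_imp_integrable:
  assumes "RS_Cauchy f g a b" "a \<le> b"
  shows "\<exists>I. has_RS_integral f g a b I"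
proof -
  define S where "S N = RS_sum f g N (uniform_partition a b N) (uniform_partition a b N)" for N
  obtain I where I: "S \<longlonglongrightarrow> I"
    using RS_Cauchy_uniform_sums[OF assms] Cauchy_convergent_iff convergent_def
    unfolding S_def by blast
  have "\<exists>\<delta>>0. \<forall>n x \<tau>. is_partition a b n x \<and> fine_tagged \<delta> n x \<tau> \<longrightarrow> \<bar>RS_sum f g n x \<tau> - I\<bar> < \<epsilon>"
    if "\<epsilon> > 0" for \<epsilon>
  proof -
    obtain \<delta> where \<delta>: "\<delta> > 0" "\<And>n x \<tau> m y \<sigma>. is_partition a b n x \<Longrightarrow> fine_tagged \<delta> n x \<tau> \<Longrightarrow>
      is_partition a b m y \<Longrightarrow> fine_tagged \<delta> m y \<sigma> \<Longrightarrow> \<bar>RS_sum f g n x \<tau> - RS_sum f g m y \<sigma>\<bar> \<le> \<epsilon> / 2"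
      using RS_CauchyD[OF assms(1), of "\<epsilon> / 2"] \<open>\<epsilon> > 0\<close> by auto
    have "eventually (\<lambda>N. \<bar>S N - I\<bar> < \<epsilon> / 2) sequentially"
      using tendstoD[OF I, of "\<epsilon> / 2"] \<open>\<epsilon> > 0\<close> by (simp add: dist_real_def)
    then obtain N where N: "\<bar>S N - I\<bar> < \<epsilon> / 2" "is_partition a b N (uniform_partition a b N)"
        "fine_tagged \<delta> N (uniform_partition a b N) (uniform_partition a b N)"
      using eventually_happens'[OF sequentially_bot
          eventually_conj[OF _ uniform_partition_eventually_fine[OF assms(2) \<delta>(1)]]] by blast
    have "\<bar>RS_sum f g n x \<tau> - I\<bar> < \<epsilon>" if "is_partition a b n x" "fine_tagged \<delta> n x \<tau>" for n x \<tau>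
      using \<delta>(2)[OF that N(2,3)] N(1) unfolding S_def by linarith
    then show ?thesis using \<delta>(1) by blast
  qed
  then show ?thesis unfolding has_RS_integral_fine by blast
qed

lemma RS_Cauchy_continuous:
  assumes "continuous_on {a..b} f" "increments_dominated g W a b" "a \<le> b"
  shows "RS_Cauchy f g a b"
  unfolding RS_Cauchy_def
proof (intro allI impI)
  fix e :: real assume "e > 0"
  define D where "D = W b - W a"
  have "D \<ge> 0" unfolding D_def using increments_dominated_mono[OF assms(2)] assms(3) by simp
  define e' where "e' = e / (D + 1)"
  have "e' > 0" unfolding e'_def using \<open>D \<ge> 0\<close> \<open>e > 0\<close> by simp
  obtain d where d: "d > 0" "\<forall>u\<in>{a..b}. \<forall>v\<in>{a..b}. dist v u < d \<longrightarrow> dist (f v) (f u) < e'"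
    using compact_uniformly_continuous[OF assms(1) compact_Icc] \<open>e' > 0\<close>
    unfolding uniformly_continuous_on_def by blast
  have "\<bar>RS_sum f g n x \<tau> - RS_sum f g m y \<sigma>\<bar> \<le> e"
    if x: "is_partition a b n x" "fine_tagged (d / 2) n x \<tau>"
      and y: "is_partition a b m y" "fine_tagged (d / 2) m y \<sigma>" for n x \<tau> m y \<sigma>
  proof -
    have "tags_close f e' n x \<tau> m y \<sigma>"
      unfolding tags_close_def
    proof (intro allI impI)
      fix j i assume ji: "j < n" "i < m" and overlap: "x j \<le> y (Suc i) \<and> y i \<le> x (Suc j)"
      have "x j \<le> \<tau> j" "\<tau> j \<le> x (Suc j)" "x (Suc j) - x j < d / 2"
        "y i \<le> \<sigma> i" "\<sigma> i \<le> y (Suc i)" "y (Suc i) - y i < d / 2"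
        using x(2) y(2) ji unfolding fine_tagged_def by auto
      moreover have "a \<le> x j" "x (Suc j) \<le> b" "a \<le> y i" "y (Suc i) \<le> b"
        using is_partition_range[OF x(1)] is_partition_range[OF y(1)] ji by auto
      ultimately have "\<tau> j \<in> {a..b}" "\<sigma> i \<in> {a..b}" "dist (\<tau> j) (\<sigma> i) < d"
        using overlap unfolding dist_real_def by auto
      then show "\<bar>f (\<tau> j) - f (\<sigma> i)\<bar> \<le> e'" using d(2) by (fastforce simp: dist_real_def)
    qed
    then have "\<bar>RS_sum f g n x \<tau> - RS_sum f g m y \<sigma>\<bar> \<le> e' * D"
      unfolding D_def using RS_sum_close x(1) y(1) assms(2) \<open>e' > 0\<close> by simp
    also have "\<dots> \<le> e" unfolding e'_def using \<open>D \<ge> 0\<close> \<open>e > 0\<close> by (simp add: field_simps)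
    finally show ?thesis .
  qed
  then show "\<exists>\<delta>>0. \<forall>n x \<tau> m y \<sigma>.
    is_partition a b n x \<and> fine_tagged \<delta> n x \<tau> \<and> is_partition a b m y \<and> fine_tagged \<delta> m y \<sigma> \<longrightarrow>
    \<bar>RS_sum f g n x \<tau> - RS_sum f g m y \<sigma>\<bar> \<le> e"
    using d(1) by (intro exI[of _ "d / 2"]) auto
qed

lemma RS_integrable_continuous:
  assumes "a \<le> b" "continuous_on {a..b} f" "increments_dominated g W a b"
  shows "\<exists>I. has_RS_integral f g a b I"
  using RS_Cauchy_imp_integrable[OF RS_Cauchy_continuous[OF assms(2,3,1)] assms(1)] .

lemma has_RS_integral_additive:
  assumes I1: "has_RS_integral f g a c I1" and I2: "has_RS_integral f g c b I2"
    and I: "has_RS_integral f g a b I" and "a \<le> c" "c \<le> b"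
  shows "I = I1 + I2"
proof -
  have close: "\<bar>I - (I1 + I2)\<bar> \<le> 3 * \<epsilon>" if "\<epsilon> > 0" for \<epsilon>
  proof -
    obtain \<delta> where \<delta>: "\<delta> > 0"
      "\<forall>n x \<tau>. is_partition a b n x \<and> fine_tagged \<delta> n x \<tau> \<longrightarrow> \<bar>RS_sum f g n x \<tau> - I\<bar> < \<epsilon>"
      using I \<open>\<epsilon> > 0\<close> unfolding has_RS_integral_fine by blast
    obtain n1 x1 where x1: "is_partition a c n1 x1" "fine_tagged \<delta> n1 x1 x1"
      "\<bar>RS_sum f g n1 x1 x1 - I1\<bar> < \<epsilon>"
      using has_RS_integral_approx[OF I1 \<open>a \<le> c\<close> \<open>\<epsilon> > 0\<close> \<delta>(1)] .
    obtain n2 x2 where x2: "is_partition c b n2 x2" "fine_tagged \<delta> n2 x2 x2"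
      "\<bar>RS_sum f g n2 x2 x2 - I2\<bar> < \<epsilon>"
      using has_RS_integral_approx[OF I2 \<open>c \<le> b\<close> \<open>\<epsilon> > 0\<close> \<delta>(1)] .
    have "\<bar>RS_sum f g (n1 + n2) (partition_append n1 x1 x2) (partition_append n1 x1 x2) - I\<bar> < \<epsilon>"
      using \<delta>(2) is_partition_append[OF x1(1) x2(1)] fine_tagged_append[OF x1(1,2) x2(1,2)] by blast
    then show ?thesis using RS_sum_append[OF x1(1) x2(1), of f g] x1(3) x2(3)
      unfolding abs_less_iff abs_le_iff by linarith
  qed
  have "\<bar>I - (I1 + I2)\<bar> \<le> 0 + e" if "e > 0" for e :: real
    using close[of "e / 3"] that by simp
  then show ?thesis using field_le_epsilon[of "\<bar>I - (I1 + I2)\<bar>" 0] by simp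
qed

lemma has_RS_integral_bound_telescoping:
  assumes "has_RS_integral f g a b J" "a \<le> b"
    and "\<And>u v. a \<le> u \<Longrightarrow> u \<le> v \<Longrightarrow> v \<le> b \<Longrightarrow> \<bar>(f u - c) * (g v - g u)\<bar> \<le> H v - H u"
  shows "\<bar>J - c * (g b - g a)\<bar> \<le> H b - H a"
proof (rule field_le_epsilon)
  fix \<epsilon> :: real assume "\<epsilon> > 0"
  obtain n x where x: "is_partition a b n x" "fine_tagged 1 n x x" "\<bar>RS_sum f g n x x - J\<bar> < \<epsilon>"
    using has_RS_integral_approx[OF assms(1,2) \<open>\<epsilon> > 0\<close>, of 1] by auto
  have "\<bar>RS_sum f g n x x - c * (g b - g a)\<bar> \<le> H b - H a"
  proof (rule RS_sum_bound_telescoping[OF x(1)], intro allI impI assms(3))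
    fix j assume "j < n"
    then show "a \<le> x j" "x j \<le> x (Suc j)" "x (Suc j) \<le> b"
      using x(1) is_partition_range[OF x(1), of j] is_partition_range[OF x(1), of "Suc j"]
      unfolding is_partition_def by auto
  qed
  then show "\<bar>J - c * (g b - g a)\<bar> \<le> H b - H a + \<epsilon>" using x(3) by linarith
qed

lemma has_RS_integral_increment_bound:
  assumes "has_RS_integral f g u v J" "u \<le> v" "increments_dominated g W u v"
    and "\<forall>r\<in>{u..v}. \<bar>f r - f u\<bar> \<le> e"
  shows "\<bar>J\<bar> \<le> e * (W v - W u) + \<bar>f u\<bar> * \<bar>g v - g u\<bar>"
proof -
  have "\<bar>J - f u * (g v - g u)\<bar> \<le> e * W v - e * W u"
  proof (rule has_RS_integral_bound_telescoping[OF assms(1,2)])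
    fix p q assume pq: "u \<le> p" "p \<le> q" "q \<le> v"
    have "\<bar>f p - f u\<bar> \<le> e" "\<bar>g q - g p\<bar> \<le> W q - W p"
      using assms(4) increments_dominatedD[OF assms(3) pq] pq by auto
    then show "\<bar>(f p - f u) * (g q - g p)\<bar> \<le> e * W q - e * W p"
      unfolding abs_mult right_diff_distrib[symmetric] by (intro mult_mono) auto
  qed
  moreover have "\<bar>J\<bar> \<le> \<bar>J - f u * (g v - g u)\<bar> + \<bar>f u * (g v - g u)\<bar>"
    by (metis abs_triangle_ineq diff_add_cancel)
  ultimately show ?thesis
    using abs_mult[of "f u" "g v - g u"] right_diff_distrib[of e "W v" "W u"] by linarith
qed

lemma power_increment_bound:
  fixes p q :: real
  assumes "0 \<le> p" "p \<le> q"
  shows "p ^ k / fact k * (q - p) \<le> (q ^ Suc k - p ^ Suc k) / fact (Suc k)"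
proof -
  have "real (Suc k) * p ^ k = (\<Sum>i<Suc k. p ^ i * p ^ (k - i))"
    by (simp add: power_add[symmetric])
  also have "\<dots> \<le> (\<Sum>i<Suc k. q ^ i * p ^ (k - i))"
    using assms by (intro sum_mono mult_right_mono power_mono) auto
  finally have "(q - p) * (real (Suc k) * p ^ k) \<le> q ^ Suc k - p ^ Suc k"
    unfolding diff_power_eq_sum using assms by (intro mult_left_mono) auto
  moreover have "p ^ k / fact k * (q - p) = (q - p) * (real (Suc k) * p ^ k) / fact (Suc k)"
    unfolding fact_Suc by simp
  ultimately show ?thesis by (metis divide_right_mono fact_ge_zero)
qed

lemma has_RS_integral_power_bound:
  assumes "has_RS_integral f g a b J" "a \<le> b" "increments_dominated g W a b" "W a = 0"
    and "\<forall>v\<in>{a..b}. \<bar>f v\<bar> \<le> W v ^ k / fact k"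
  shows "\<bar>J\<bar> \<le> W b ^ Suc k / fact (Suc k)"
proof -
  have "\<bar>J - 0 * (g b - g a)\<bar> \<le> W b ^ Suc k / fact (Suc k) - W a ^ Suc k / fact (Suc k)"
  proof (rule has_RS_integral_bound_telescoping[OF assms(1,2)])
    fix u v assume uv: "a \<le> u" "u \<le> v" "v \<le> b"
    have W: "0 \<le> W u" "W u \<le> W v"
      using increments_dominated_mono[OF assms(3), of a u]
        increments_dominated_mono[OF assms(3), of u v] uv assms(4) by auto
    have "\<bar>(f u - 0) * (g v - g u)\<bar> \<le> W u ^ k / fact k * (W v - W u)"
      unfolding abs_mult using assms(5) increments_dominatedD[OF assms(3) uv] uv W
      by (intro mult_mono) auto
    also have "\<dots> \<le> (W v ^ Suc k - W u ^ Suc k) / fact (Suc k)"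
      by (rule power_increment_bound) fact+
    finally show "\<bar>(f u - 0) * (g v - g u)\<bar> \<le>
        W v ^ Suc k / fact (Suc k) - W u ^ Suc k / fact (Suc k)"
      by (simp add: diff_divide_distrib)
  qed
  then show ?thesis using assms(4) by simp
qed

lemma RS_indefinite_integral_increment:
  assumes "s \<le> u" "u \<le> v" "v \<le> t" and f: "continuous_on {s..t} f"
    and dom: "increments_dominated g W s t"
    and F: "\<And>r. r \<in> {s..t} \<Longrightarrow> has_RS_integral f g s r (F r)"
    and e: "\<forall>r\<in>{u..v}. \<bar>f r - f u\<bar> \<le> e"
  shows "\<bar>F v - F u\<bar> \<le> e * (W t - W s) + \<bar>f u\<bar> * \<bar>g v - g u\<bar>"
proof -
  have dom_uv: "increments_dominated g W u v"
    using increments_dominated_subinterval[OF dom] assms(1-3) by simp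
  obtain J where J: "has_RS_integral f g u v J"
    using RS_integrable_continuous[OF assms(2) continuous_on_subset[OF f] dom_uv] assms(1-3) by auto
  have "F v = F u + J"
    by (rule has_RS_integral_additive[OF F J F]) (use assms(1-3) in auto)
  moreover have "\<bar>J\<bar> \<le> e * (W v - W u) + \<bar>f u\<bar> * \<bar>g v - g u\<bar>"
    using has_RS_integral_increment_bound[OF J assms(2) dom_uv e] .
  moreover have "0 \<le> e" using e assms(2) by force
  then have "e * (W v - W u) \<le> e * (W t - W s)"
    using increments_dominated_mono[OF dom, of s u] increments_dominated_mono[OF dom, of v t]
      assms(1-3)
    by (intro mult_left_mono) auto
  ultimately show ?thesis by simp
qed

lemma uniformly_continuous_on_real_ordered:
  fixes F :: "real \<Rightarrow> real"
  assumes "\<And>\<epsilon>. \<epsilon> > 0 \<Longrightarrow> \<exists>d>0. \<forall>u\<in>S. \<forall>v\<in>S. u \<le> v \<and> v - u < d \<longrightarrow> \<bar>F v - F u\<bar> < \<epsilon>"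
  shows "uniformly_continuous_on S F"
  unfolding uniformly_continuous_on_def
proof (intro allI impI)
  fix \<epsilon> :: real assume "\<epsilon> > 0"
  then obtain d where d: "d > 0" "\<forall>u\<in>S. \<forall>v\<in>S. u \<le> v \<and> v - u < d \<longrightarrow> \<bar>F v - F u\<bar> < \<epsilon>"
    using assms by blast
  have "dist (F v) (F u) < \<epsilon>" if "u \<in> S" "v \<in> S" "dist v u < d" for u v
    using d(2) that unfolding dist_real_def by (cases "u \<le> v") (auto simp: abs_minus_commute)
  then show "\<exists>d>0. \<forall>u\<in>S. \<forall>v\<in>S. dist v u < d \<longrightarrow> dist (F v) (F u) < \<epsilon>"
    using d(1) by blast
qed

lemma RS_indefinite_integral_continuous:
  assumes "s \<le> t" and f: "continuous_on {s..t} f" and g: "continuous_on {s..t} g"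
    and dom: "increments_dominated g W s t"
    and F: "\<And>u. u \<in> {s..t} \<Longrightarrow> has_RS_integral f g s u (F u)"
  shows "continuous_on {s..t} F"
proof (rule uniformly_continuous_imp_continuous, rule uniformly_continuous_on_real_ordered)
  fix \<epsilon> :: real assume "\<epsilon> > 0"
  define D where "D = W t - W s"
  have "D \<ge> 0" unfolding D_def using increments_dominated_mono[OF dom] \<open>s \<le> t\<close> by simp
  obtain B where "B \<ge> 0" and B: "\<And>u. u \<in> {s..t} \<Longrightarrow> \<bar>f u\<bar> \<le> B"
    using continuous_on_compact_bound[OF compact_Icc f] by (metis real_norm_def)
  define e where "e = \<epsilon> / (2 * (D + 1))"
  define e' where "e' = \<epsilon> / (2 * (B + 1))"
  have "e > 0" "e' > 0" using \<open>\<epsilon> > 0\<close> \<open>D \<ge> 0\<close> \<open>B \<ge> 0\<close> unfolding e_def e'_def by simp_all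
  have "e * D < \<epsilon> / 2" "B * e' < \<epsilon> / 2"
    using \<open>\<epsilon> > 0\<close> \<open>D \<ge> 0\<close> \<open>B \<ge> 0\<close> unfolding e_def e'_def by (simp_all add: field_simps)
  obtain d1 where d1: "d1 > 0" "\<forall>u\<in>{s..t}. \<forall>v\<in>{s..t}. dist v u < d1 \<longrightarrow> dist (f v) (f u) < e"
    using compact_uniformly_continuous[OF f compact_Icc] \<open>e > 0\<close>
    unfolding uniformly_continuous_on_def by blast
  obtain d2 where d2: "d2 > 0" "\<forall>u\<in>{s..t}. \<forall>v\<in>{s..t}. dist v u < d2 \<longrightarrow> dist (g v) (g u) < e'"
    using compact_uniformly_continuous[OF g compact_Icc] \<open>e' > 0\<close>
    unfolding uniformly_continuous_on_def by blast
  have "\<bar>F v - F u\<bar> < \<epsilon>"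
    if uv: "u \<in> {s..t}" "v \<in> {s..t}" "u \<le> v" "v - u < min d1 d2" for u v
  proof -
    have "\<bar>f r - f u\<bar> \<le> e" if "r \<in> {u..v}" for r
    proof -
      have "r \<in> {s..t}" "dist r u < d1" using uv that by (auto simp: dist_real_def)
      then show ?thesis using d1(2) uv(1) by (fastforce simp: dist_real_def)
    qed
    then have "\<bar>F v - F u\<bar> \<le> e * D + \<bar>f u\<bar> * \<bar>g v - g u\<bar>"
      unfolding D_def using RS_indefinite_integral_increment[OF _ _ _ f dom F] uv by simp
    moreover have "\<bar>g v - g u\<bar> < e'"
      using d2(2) uv by (auto simp: dist_real_def)
    then have "\<bar>f u\<bar> * \<bar>g v - g u\<bar> \<le> B * e'"
      using B[of u] uv \<open>B \<ge> 0\<close> by (intro mult_mono) auto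
    ultimately show ?thesis using \<open>e * D < \<epsilon> / 2\<close> \<open>B * e' < \<epsilon> / 2\<close> by linarith
  qed
  then show "\<exists>d>0. \<forall>u\<in>{s..t}. \<forall>v\<in>{s..t}. u \<le> v \<and> v - u < d \<longrightarrow> \<bar>F v - F u\<bar> < \<epsilon>"
    using d1(1) d2(1) by (intro exI[of _ "min d1 d2"]) auto
qed

section \<open>The variation function\<close>

definition variation_sum :: "(real \<Rightarrow> 'v::real_normed_vector) \<Rightarrow> nat \<Rightarrow> (nat \<Rightarrow> real) \<Rightarrow> real" where
  "variation_sum \<gamma> n x = (\<Sum>j<n. norm (\<gamma> (x (Suc j)) - \<gamma> (x j)))"

definition variation :: "(real \<Rightarrow> 'v::real_normed_vector) \<Rightarrow> real \<Rightarrow> real \<Rightarrow> real" where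
  "variation \<gamma> a b = Sup {variation_sum \<gamma> n x | n x. is_partition a b n x}"

lemma is_partition_extend:
  "is_partition a u n x \<Longrightarrow> u \<le> v \<Longrightarrow> is_partition a v (Suc n) (x(Suc n := v))"
  unfolding is_partition_def by (auto simp: less_Suc_eq)

lemma variation_sum_extend:
  "is_partition a u n x \<Longrightarrow>
    variation_sum \<gamma> (Suc n) (x(Suc n := v)) = variation_sum \<gamma> n x + norm (\<gamma> v - \<gamma> u)"
  unfolding is_partition_def variation_sum_def by simp

lemma bounded_variation_on_bdd_above:
  assumes "bounded_variation_on \<gamma> s t" "u \<le> t"
  shows "bdd_above {variation_sum \<gamma> n x | n x. is_partition s u n x}"
proof -
  obtain M where M: "\<forall>n x. is_partition s t n x \<longrightarrow> variation_sum \<gamma> n x \<le> M"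
    using assms(1) unfolding bounded_variation_on_def variation_sum_def by blast
  have "variation_sum \<gamma> n x \<le> M" if "is_partition s u n x" for n x
    using M[rule_format, OF is_partition_extend[OF that assms(2)]]
      variation_sum_extend[OF that, of \<gamma> t]
    by (smt (verit) norm_ge_zero)
  then show ?thesis unfolding bdd_above_def by blast
qed

lemma variation_increment:
  assumes "bounded_variation_on \<gamma> s t" "s \<le> u" "u \<le> v" "v \<le> t"
  shows "variation \<gamma> s u + norm (\<gamma> v - \<gamma> u) \<le> variation \<gamma> s v"
proof -
  have "is_partition s u 1 (\<lambda>j. if j = 0 then s else u)"
    unfolding is_partition_def using assms(2) by auto
  then have nonempty: "{variation_sum \<gamma> n x | n x. is_partition s u n x} \<noteq> {}" by blast
  have "z + norm (\<gamma> v - \<gamma> u) \<le> variation \<gamma> s v"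
    if z: "z \<in> {variation_sum \<gamma> n x | n x. is_partition s u n x}" for z
  proof -
    obtain n x where "z = variation_sum \<gamma> n x" "is_partition s u n x" using z by blast
    then show ?thesis
      unfolding variation_def
      using is_partition_extend[of s u n x v] variation_sum_extend[of s u n x \<gamma> v] assms(3)
        bounded_variation_on_bdd_above[OF assms(1,4)]
      by (metis (mono_tags, lifting) cSup_upper mem_Collect_eq)
  qed
  then have "variation \<gamma> s u \<le> variation \<gamma> s v - norm (\<gamma> v - \<gamma> u)"
    unfolding variation_def[of \<gamma> s u] using nonempty by (intro cSup_least) (auto simp: field_simps)
  then show ?thesis by simp
qed

lemma variation_self: "variation \<gamma> s s = 0"
proof -
  have "variation_sum \<gamma> n x = 0" if "is_partition s s n x" for n x
    unfolding variation_sum_def using is_partition_trivial[OF that] by (intro sum.neutral) auto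
  moreover have "is_partition s s 0 (\<lambda>_. s)" unfolding is_partition_def by simp
  ultimately have "{variation_sum \<gamma> n x | n x. is_partition s s n x} = {0}" by fastforce
  then show ?thesis unfolding variation_def by simp
qed

lemma increments_dominated_coordinate:
  fixes \<gamma> :: "real \<Rightarrow> 'v::euclidean_space"
  assumes "bounded_variation_on \<gamma> s t" "e \<in> Basis"
  shows "increments_dominated (\<lambda>u. \<gamma> u \<bullet> e) (variation \<gamma> s) s t"
  unfolding increments_dominated_def
proof (intro allI impI)
  fix u v assume "s \<le> u \<and> u \<le> v \<and> v \<le> t"
  then have "norm (\<gamma> v - \<gamma> u) \<le> variation \<gamma> s v - variation \<gamma> s u"
    using variation_increment[OF assms(1)] by force
  moreover have "\<bar>\<gamma> v \<bullet> e - \<gamma> u \<bullet> e\<bar> \<le> norm (\<gamma> v - \<gamma> u)"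
    using Basis_le_norm[OF assms(2), of "\<gamma> v - \<gamma> u"] by (simp add: inner_diff_left)
  ultimately show "\<bar>\<gamma> v \<bullet> e - \<gamma> u \<bullet> e\<bar> \<le> variation \<gamma> s v - variation \<gamma> s u" by linarith
qed

section \<open>Factorial decay of the signature\<close>

lemma sig_rev_continuous_bound:
  fixes \<gamma> :: "real \<Rightarrow> 'v::euclidean_space"
  assumes "s \<le> t" "continuous_on {s..t} \<gamma>" "bounded_variation_on \<gamma> s t" "set w \<subseteq> Basis"
  shows "continuous_on {s..t} (sig_rev \<gamma> s w) \<and>
    (\<forall>u\<in>{s..t}. \<bar>sig_rev \<gamma> s w u\<bar> \<le> variation \<gamma> s u ^ length w / fact (length w))"
  using assms(4)
proof (induction w)
  case (Cons e w)
  define f where "f = sig_rev \<gamma> s w"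
  define g where "g u = \<gamma> u \<bullet> e" for u
  have f: "continuous_on {s..t} f" "\<forall>u\<in>{s..t}. \<bar>f u\<bar> \<le> variation \<gamma> s u ^ length w / fact (length w)"
    using Cons unfolding f_def by auto
  have g: "continuous_on {s..t} g" unfolding g_def by (intro continuous_intros assms(2))
  have dom: "increments_dominated g (variation \<gamma> s) s t"
    unfolding g_def using increments_dominated_coordinate[OF assms(3)] Cons.prems by simp
  have F: "has_RS_integral f g s u (sig_rev \<gamma> s (e # w) u)" if u: "u \<in> {s..t}" for u
  proof -
    obtain I where I: "has_RS_integral f g s u I"
      using RS_integrable_continuous[of s u f g "variation \<gamma> s"]
        continuous_on_subset[OF f(1), of "{s..u}"] increments_dominated_subinterval[OF dom, of s u] u
      by auto
    moreover have "sig_rev \<gamma> s (e # w) u = RS_integral f g s u"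
      unfolding f_def g_def by simp
    ultimately show ?thesis using RS_integral_eqI u by auto
  qed
  have "\<bar>sig_rev \<gamma> s (e # w) u\<bar> \<le> variation \<gamma> s u ^ Suc (length w) / fact (Suc (length w))"
    if u: "u \<in> {s..t}" for u
  proof (rule has_RS_integral_power_bound[OF F[OF u]])
    show "increments_dominated g (variation \<gamma> s) s u"
      using increments_dominated_subinterval[OF dom, of s u] u by simp
  qed (use u f(2) variation_self in auto)
  then show ?case
    using RS_indefinite_integral_continuous[OF assms(1) f(1) g dom F] by simp
qed simp

lemma signature_bound:
  fixes \<gamma> :: "real \<Rightarrow> 'v::euclidean_space"
  assumes "s \<le> t" "continuous_on {s..t} \<gamma>" "bounded_variation_on \<gamma> s t" "w \<in> words k"
  shows "\<bar>signature \<gamma> s t w\<bar> \<le> variation \<gamma> s t ^ k / fact k"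
  using sig_rev_continuous_bound[OF assms(1-3), of "rev w"] assms(1,4)
  unfolding signature_def words_def by auto

lemma level_norm2_le:
  fixes a :: "'v::euclidean_space tensor_series"
  assumes "\<forall>w\<in>words k. \<bar>a w\<bar> \<le> B"
  shows "level_norm2 a k \<le> real DIM('v) ^ k * B\<^sup>2"
proof -
  have "level_norm2 a k \<le> (\<Sum>w\<in>(words k :: 'v list set). B\<^sup>2)"
    unfolding level_norm2_def
  proof (intro sum_mono)
    fix w :: "'v list" assume "w \<in> words k"
    then have "\<bar>a w\<bar> \<le> B" using assms by blast
    then show "(a w)\<^sup>2 \<le> B\<^sup>2" by (metis abs_ge_zero power2_abs power_mono)
  qed
  also have "\<dots> = real DIM('v) ^ k * B\<^sup>2"
    unfolding words_def using card_lists_length_eq[of "Basis :: 'v set" k]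
    by (simp add: conj_commute)
  finally show ?thesis .
qed

lemma T_phi_factorial_decay:
  fixes a :: "'v::euclidean_space tensor_series"
  assumes "\<forall>k. \<phi> k \<ge> 0" "summable (\<lambda>k. C ^ k * \<phi> k / (fact k)\<^sup>2)" "real DIM('v) * L\<^sup>2 \<le> C"
    and "\<forall>k. \<forall>w\<in>words k. \<bar>a w\<bar> \<le> L ^ k / fact k"
  shows "a \<in> T_phi \<phi>"
  unfolding T_phi_def mem_Collect_eq
proof (rule summable_comparison_test'[OF assms(2)])
  fix k :: nat
  have "0 \<le> level_norm2 a k" unfolding level_norm2_def by (intro sum_nonneg) simp
  then have "\<bar>\<phi> k * level_norm2 a k\<bar> = \<phi> k * level_norm2 a k"
    using assms(1) by (simp add: abs_mult)
  also have "\<dots> \<le> \<phi> k * (real DIM('v) ^ k * (L ^ k / fact k)\<^sup>2)"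
    using assms(1) level_norm2_le[of k a] assms(4) by (simp add: mult_left_mono)
  also have "\<dots> = (real DIM('v) * L\<^sup>2) ^ k * \<phi> k / (fact k)\<^sup>2"
    by (simp add: power_divide power_mult_distrib flip: power_mult) (simp add: mult.commute)
  also have "\<dots> \<le> C ^ k * \<phi> k / (fact k)\<^sup>2"
    using assms(1,3) by (intro divide_right_mono mult_right_mono power_mono) auto
  finally show "norm (\<phi> k * level_norm2 a k) \<le> C ^ k * \<phi> k / (fact k)\<^sup>2" by simp
qed

theorem mainTheorem10:
  fixes \<phi> :: "nat \<Rightarrow> real"
  assumes phi_pos: "\<forall>k. \<phi> k > 0"
    and phi_sum: "\<forall>C::real. C > 0 \<longrightarrow> summable (\<lambda>k. C ^ k * \<phi> k / (fact k)\<^sup>2)"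
  shows "\<forall>(\<gamma>::real \<Rightarrow> 'v::euclidean_space) s t.
           s < t \<and> continuous_on {s..t} \<gamma> \<and> bounded_variation_on \<gamma> s t
           \<longrightarrow> signature \<gamma> s t \<in> T_phi \<phi>"
proof (intro allI impI)
  fix \<gamma> :: "real \<Rightarrow> 'v" and s t :: real
  assume "s < t \<and> continuous_on {s..t} \<gamma> \<and> bounded_variation_on \<gamma> s t"
  then have "\<forall>k. \<forall>w\<in>words k. \<bar>signature \<gamma> s t w\<bar> \<le> variation \<gamma> s t ^ k / fact k"
    using signature_bound[of s t \<gamma>] by auto
  moreover define C where "C = real DIM('v) * (variation \<gamma> s t)\<^sup>2 + 1"
  then have "summable (\<lambda>k. C ^ k * \<phi> k / (fact k)\<^sup>2)"
    using phi_sum by (simp add: add_nonneg_pos)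
  ultimately show "signature \<gamma> s t \<in> T_phi \<phi>"
    using T_phi_factorial_decay[of \<phi> C "variation \<gamma> s t" "signature \<gamma> s t"] phi_pos C_def
    by (simp add: less_imp_le)
qed

end
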